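(* Assume the $abc$-conjecture. Let $k\ge 3$ be an integer and $\epsilon>0$. Then there exist constants $c_\epsilon>0$ and $C>0$ (depending on $k$ and $\epsilon$) such that for every real $x \ge C$, the interval $(x,\ x + c_\epsilon x^{1-(2+\epsilon)/k}]$ contains at most one $k$-full number.
   Context: A positive integer $n$ is $k$-full if every prime $p$ dividing $n$ satisfies $p^k\mid n$. For a nonzero integer $m$, $\kappa(m)=\prod_{p\mid m} p$. The $abc$-conjecture is the statement: for every $\epsilon>0$ there is a constant $C_\epsilon>0$ such that for all integers $a,b,c$ with $a+b=c$ and $\gcd(a,b)=1$, one has $\max\{|a|,|b|,|c|\} \le C_\epsilon\, \kappa(abc)^{1+\epsilon}$. *)

theory Defs
  imports Complex_Main "HOL-Computational_Algebra.Primes"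
begin

definition k_full :: "nat \<Rightarrow> nat \<Rightarrow> bool" where
  "k_full k n \<longleftrightarrow> n > 0 \<and> (\<forall>p::nat. prime p \<longrightarrow> p dvd n \<longrightarrow> p ^ k dvd n)"

definition kappa :: "int \<Rightarrow> nat" where
  "kappa m = (\<Prod>p\<in>prime_factors (nat \<bar>m\<bar>). p)"

definition abc_conjecture :: bool where
  "abc_conjecture \<longleftrightarrow>
     (\<forall>\<epsilon>::real. \<epsilon> > 0 \<longrightarrow> (\<exists>C::real. C > 0 \<and>
        (\<forall>a b c :: int. a + b = c \<longrightarrow> gcd a b = 1 \<longrightarrow> a * b * c \<noteq> 0 \<longrightarrow>
           real_of_int (max \<bar>a\<bar> (max \<bar>b\<bar> \<bar>c\<bar>)) \<le> C * real (kappa (a * b * c)) powr (1 + \<epsilon>))))"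

end

theory Submission
  imports Defs
begin

text \<open>If m < n are k-full and g = gcd m n, apply abc to the coprime triple
  m/g + (n-m)/g = n/g. Since rad m \<le> m^(1/k) and rad n \<le> n^(1/k), this gives
  n \<le> C (m^(1/k) n^(1/k) (n-m))^(1+\<delta>). If both lie in (x, x + c x^(1-\<delta>-2/k)], then
  m, n \<le> 2x and the product inside is at most 4 c x^(1-\<delta>), so n \<le> 4 C c x, which
  contradicts n > x once c is small. With \<delta> = \<epsilon>/k the exponent is 1 - (2+\<epsilon>)/k.\<close>

definition rad :: "nat \<Rightarrow> nat" where
  "rad n = (\<Prod>p\<in>prime_factors n. p)"

definition abc_inequality :: "real \<Rightarrow> real \<Rightarrow> bool" where
  "abc_inequality C \<delta> \<longleftrightarrow>
     (\<forall>a b c :: int. a + b = c \<longrightarrow> gcd a b = 1 \<longrightarrow> a * b * c \<noteq> 0 \<longrightarrow>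
        real_of_int (max \<bar>a\<bar> (max \<bar>b\<bar> \<bar>c\<bar>)) \<le> C * real (kappa (a * b * c)) powr (1 + \<delta>))"

lemma abc_conjecture_obtain:
  assumes "abc_conjecture" "\<delta> > 0"
  obtains C where "C > 0" "abc_inequality C \<delta>"
  using assms unfolding abc_conjecture_def abc_inequality_def by blast

lemma kappa_of_nat [simp]: "kappa (int n) = rad n"
  by (simp add: kappa_def rad_def)

lemma prod_prime_factors_subset_pos:
  "A \<subseteq> prime_factors (n :: nat) \<Longrightarrow> (\<Prod>p\<in>A. p) > 0"
  by (rule prod_pos) (auto dest: in_prime_factors_imp_prime prime_gt_0_nat)

lemma rad_pos: "rad n > 0"
  unfolding rad_def by (rule prod_prime_factors_subset_pos[OF order.refl])

lemma rad_power_dvd: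
  assumes "n > 0" "\<And>p. p \<in> prime_factors n \<Longrightarrow> p ^ j dvd n"
  shows "rad n ^ j dvd n"
proof -
  have "rad n ^ j = (\<Prod>p\<in>prime_factors n. p ^ j)"
    by (simp add: rad_def prod_power_distrib)
  also have "\<dots> dvd (\<Prod>p\<in>prime_factors n. p ^ multiplicity p n)"
  proof (rule prod_dvd_prod)
    fix p assume p: "p \<in> prime_factors n"
    then have "\<not> is_unit p" by (auto dest: in_prime_factors_imp_prime not_prime_unit)
    with assms p have "j \<le> multiplicity p n"
      using power_dvd_iff_le_multiplicity[of n p j] by simp
    then show "p ^ j dvd p ^ multiplicity p n" by (rule le_imp_power_dvd)
  qed
  also have "\<dots> = n" using assms(1) prod_prime_factors[of n] by simp
  finally show ?thesis .
qed

lemma rad_le: "n > 0 \<Longrightarrow> rad n \<le> n"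
  using rad_power_dvd[of n 1] by (auto simp: in_prime_factors_iff dvd_imp_le)

lemma rad_k_full_le:
  assumes "k_full k n" "k > 0"
  shows "real (rad n) \<le> real n powr (1 / real k)"
proof -
  have "rad n ^ k dvd n" using assms by (intro rad_power_dvd) (auto simp: k_full_def)
  then have "real (rad n) ^ k \<le> real n"
    using assms by (metis dvd_imp_le k_full_def of_nat_le_iff of_nat_power)
  then have "(real (rad n) ^ k) powr (1 / real k) \<le> real n powr (1 / real k)"
    by (intro powr_mono2) auto
  also have "(real (rad n) ^ k) powr (1 / real k) = real (rad n)"
    using assms(2) rad_pos[of n] by (simp add: powr_realpow[symmetric] powr_powr)
  finally show ?thesis .
qed

lemma rad_mult_le:
  assumes "a > 0" "b > 0"
  shows "rad (a * b) \<le> rad a * rad b"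
proof -
  let ?A = "prime_factors a" and ?B = "prime_factors b"
  have "rad (a * b) = (\<Prod>p\<in>?A \<union> ?B. p)"
    using assms by (simp add: rad_def prime_factors_product)
  also have "\<dots> \<le> (\<Prod>p\<in>?A \<union> ?B. p) * (\<Prod>p\<in>?A \<inter> ?B. p)"
    using prod_prime_factors_subset_pos[of "?A \<inter> ?B" a] by (simp add: Suc_le_eq)
  also have "\<dots> = rad a * rad b"
    unfolding rad_def by (rule prod.union_inter) auto
  finally show ?thesis .
qed

lemma rad_dvd_mono:
  assumes "b > 0" "a dvd b"
  shows "rad a \<le> rad b"
proof -
  have sub: "prime_factors a \<subseteq> prime_factors b"
    using assms by (simp add: dvd_prime_factors)
  have "rad a \<le> (\<Prod>p\<in>prime_factors b - prime_factors a. p) * rad a"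
    using prod_prime_factors_subset_pos[of "prime_factors b - prime_factors a" b] by (simp add: Suc_le_eq)
  also have "\<dots> = rad b"
    unfolding rad_def by (rule prod.subset_diff[OF sub, symmetric]) simp
  finally show ?thesis .
qed

lemma abc_inequality_nat:
  assumes "abc_inequality C \<delta>" "coprime a b" "a > 0" "b > 0"
  shows "real (a + b) \<le> C * real (rad (a * b * (a + b))) powr (1 + \<delta>)"
proof -
  have "gcd (int a) (int b) = 1"
    using assms(2) by (metis coprime_iff_gcd_eq_1 gcd_int_int_eq of_nat_1)
  moreover have "max \<bar>int a\<bar> (max \<bar>int b\<bar> \<bar>int a + int b\<bar>) = int (a + b)"
    by simp
  moreover have "int a * int b * (int a + int b) = int (a * b * (a + b))"
    by simp
  ultimately show ?thesis
    using assms(1,3,4) unfolding abc_inequality_def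
    by (metis of_int_of_nat_eq kappa_of_nat mult_eq_0_iff of_nat_0_less_iff
        of_nat_less_0_iff add_pos_pos not_less_iff_gr_or_eq)
qed

lemma abc_k_full_pair:
  fixes k m n :: nat
  assumes abc: "abc_inequality C \<delta>" and "C > 0" "\<delta> > 0" "k > 0"
    and fm: "k_full k m" and fn: "k_full k n" and "m < n"
  shows "real n \<le> C * (real m powr (1/k) * real n powr (1/k) * real (n - m)) powr (1 + \<delta>)"
proof -
  have "m > 0" "n > 0" using fm fn by (auto simp: k_full_def)
  define g where "g = gcd m n"
  define a where "a = m div g"
  define b where "b = n div g - a"
  have "g > 0" using \<open>m > 0\<close> by (simp add: g_def)
  have m_eq: "m = g * a" and n_eq: "n = g * (a + b)"
    using \<open>m < n\<close> \<open>g > 0\<close> unfolding a_def b_def g_def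
    by (auto simp: less_imp_le_nat div_le_mono)
  then have nm_eq: "n - m = g * b" by (metis add_diff_cancel_left' diff_mult_distrib2)
  have "a > 0" using m_eq \<open>m > 0\<close> by simp
  have "b > 0" using nm_eq \<open>m < n\<close> by (metis mult_0_right zero_less_diff gr0I)
  have "n div g = a + b" using n_eq \<open>g > 0\<close> by simp
  then have "coprime a (a + b)"
    using div_gcd_coprime[of m n] \<open>m > 0\<close> unfolding a_def g_def by simp
  then have "coprime a b"
    by (metis coprime_iff_gcd_eq_1 gcd_add2 add.commute)
  have "rad (a * b * (a + b)) \<le> rad a * rad b * rad (a + b)"
    using \<open>a > 0\<close> \<open>b > 0\<close>
    by (metis add_pos_pos mult_le_mono1 mult_pos_pos order.trans rad_mult_le)
  also have "\<dots> \<le> rad m * b * rad n"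
    using \<open>m > 0\<close> \<open>n > 0\<close> \<open>b > 0\<close> m_eq n_eq
    by (intro mult_le_mono rad_dvd_mono rad_le) simp_all
  finally have "real (rad (a * b * (a + b))) \<le> real m powr (1/k) * real b * real n powr (1/k)"
    using rad_k_full_le[OF fm \<open>k > 0\<close>] rad_k_full_le[OF fn \<open>k > 0\<close>]
    by (smt (verit) mult_mono of_nat_0_le_iff of_nat_le_iff of_nat_mult powr_ge_zero)
  then have rad_bound: "C * real (rad (a * b * (a + b))) powr (1 + \<delta>)
      \<le> C * (real m powr (1/k) * real b * real n powr (1/k)) powr (1 + \<delta>)"
    using \<open>C > 0\<close> \<open>\<delta> > 0\<close> by (intro mult_left_mono powr_mono2) auto
  have "real n = real g * real (a + b)" using n_eq by simp
  also have "\<dots> \<le> real g * (C * (real m powr (1/k) * real b * real n powr (1/k)) powr (1 + \<delta>))"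
    using abc_inequality_nat[OF abc \<open>coprime a b\<close> \<open>a > 0\<close> \<open>b > 0\<close>] rad_bound
    by (intro mult_left_mono) auto
  also have "\<dots> \<le> real g powr (1 + \<delta>) * (C * (real m powr (1/k) * real b * real n powr (1/k)) powr (1 + \<delta>))"
    using \<open>g > 0\<close> \<open>\<delta> > 0\<close> \<open>C > 0\<close> powr_mono[of 1 "1 + \<delta>" "real g"]
    by (intro mult_right_mono) auto
  also have "\<dots> = C * (real m powr (1/k) * real n powr (1/k) * real (n - m)) powr (1 + \<delta>)"
    by (simp add: nm_eq powr_mult mult_ac)
  finally show ?thesis .
qed

lemma scaled_powr_one_minus_powr_one_plus_le:
  fixes t x \<delta> :: real
  assumes "0 < t" "t \<le> 1" "1 \<le> x" "\<delta> > 0"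
  shows "(t * x powr (1 - \<delta>)) powr (1 + \<delta>) \<le> t * x"
proof -
  have "(t * x powr (1 - \<delta>)) powr (1 + \<delta>) = t powr (1 + \<delta>) * x powr ((1 - \<delta>) * (1 + \<delta>))"
    using assms by (simp add: powr_mult powr_powr)
  also have "\<dots> \<le> t powr 1 * x powr 1"
    using assms by (intro mult_mono powr_mono' powr_mono) (auto simp: algebra_simps)
  finally show ?thesis using assms by simp
qed

lemma double_powr_square_le:
  fixes x :: real and k :: nat
  assumes "x > 0" "k > 0"
  shows "(2 * x) powr (1 / k) * (2 * x) powr (1 / k) \<le> 4 * x powr (2 / k)"
proof -
  have "(2 * x) powr (1 / k) * (2 * x) powr (1 / k) = (2 * x) powr (2 / k)"
    by (simp add: powr_add[symmetric])
  also have "\<dots> = 2 powr (2 / k) * x powr (2 / k)"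
    using assms by (simp add: powr_mult)
  also have "2 powr (2 / k) \<le> (2::real) powr 2"
    using assms by (intro powr_mono) (auto simp: field_simps)
  finally show ?thesis using assms by (simp add: mult_right_mono)
qed

lemma k_full_not_both_in_short_interval:
  fixes k m n :: nat and x :: real
  assumes abc: "abc_inequality C \<delta>" and "C > 0" "\<delta> > 0" "k > 0"
    and fm: "k_full k m" and fn: "k_full k n" and "m < n" and "1 \<le> x" and "x < real m"
    and n_le: "real n \<le> x + min 1 (1 / C) / 4 * x powr (1 - \<delta> - 2 / k)"
  shows False
proof -
  define t where "t = min 1 (1 / C)"
  have "0 < t" "t \<le> 1" "C * t \<le> 1"
    using \<open>C > 0\<close> by (auto simp: t_def min_def field_simps)
  have "1 - \<delta> - 2 / k \<le> 1"
    using \<open>\<delta> > 0\<close> divide_nonneg_nonneg[of 2 "real k"] by linarith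
  then have "x powr (1 - \<delta> - 2 / k) \<le> x powr 1"
    using \<open>1 \<le> x\<close> by (rule powr_mono)
  then have "t / 4 * x powr (1 - \<delta> - 2 / k) \<le> 1 * x"
    using \<open>0 < t\<close> \<open>t \<le> 1\<close> \<open>1 \<le> x\<close> by (intro mult_mono) auto
  then have "real n \<le> 2 * x" "real m \<le> 2 * x"
    using n_le \<open>m < n\<close> unfolding t_def[symmetric] by simp_all
  have "real (n - m) \<le> t / 4 * x powr (1 - \<delta> - 2 / k)"
    using n_le \<open>x < real m\<close> \<open>m < n\<close> unfolding t_def[symmetric] by (simp add: of_nat_diff)
  have "real m powr (1/k) * real n powr (1/k) * real (n - m)
      \<le> (2 * x) powr (1/k) * (2 * x) powr (1/k) * (t / 4 * x powr (1 - \<delta> - 2 / k))"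
    using \<open>real m \<le> 2 * x\<close> \<open>real n \<le> 2 * x\<close> \<open>real (n - m) \<le> _\<close>
    by (intro mult_mono powr_mono2) auto
  also have "\<dots> \<le> 4 * x powr (2 / k) * (t / 4 * x powr (1 - \<delta> - 2 / k))"
    using double_powr_square_le[of x k] \<open>1 \<le> x\<close> \<open>k > 0\<close> \<open>0 < t\<close> by (intro mult_right_mono) auto
  also have "\<dots> = t * x powr (1 - \<delta>)"
    using \<open>1 \<le> x\<close> by (simp add: powr_add[symmetric])
  finally have "C * (real m powr (1/k) * real n powr (1/k) * real (n - m)) powr (1 + \<delta>)
      \<le> C * (t * x powr (1 - \<delta>)) powr (1 + \<delta>)"
    using \<open>C > 0\<close> \<open>\<delta> > 0\<close> by (intro mult_left_mono powr_mono2) auto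
  with abc_k_full_pair[OF abc \<open>C > 0\<close> \<open>\<delta> > 0\<close> \<open>k > 0\<close> fm fn \<open>m < n\<close>]
  have "real n \<le> C * (t * x powr (1 - \<delta>)) powr (1 + \<delta>)"
    by linarith
  also have "\<dots> \<le> C * (t * x)"
    using scaled_powr_one_minus_powr_one_plus_le[OF \<open>0 < t\<close> \<open>t \<le> 1\<close> \<open>1 \<le> x\<close> \<open>\<delta> > 0\<close>] \<open>C > 0\<close>
    by simp
  also have "\<dots> \<le> x"
    using \<open>C * t \<le> 1\<close> \<open>1 \<le> x\<close> by (simp add: mult.assoc[symmetric] mult_le_cancel_right1)
  finally show False using \<open>x < real m\<close> \<open>m < n\<close> by simp
qed

theorem mainTheorem7:
  fixes k :: nat and \<epsilon> :: real
  assumes "abc_conjecture" and "k \<ge> 3" and "\<epsilon> > 0"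
  shows "\<exists>c C :: real. c > 0 \<and> C > 0 \<and>
    (\<forall>x::real. x \<ge> C \<longrightarrow>
       (\<forall>m n :: nat.
          k_full k m \<longrightarrow> k_full k n \<longrightarrow>
          x < real m \<longrightarrow> real m \<le> x + c * x powr (1 - (2 + \<epsilon>) / real k) \<longrightarrow>
          x < real n \<longrightarrow> real n \<le> x + c * x powr (1 - (2 + \<epsilon>) / real k) \<longrightarrow>
          m = n))"
proof -
  have "k > 0" using assms(2) by simp
  define \<delta> where "\<delta> = \<epsilon> / k"
  have "\<delta> > 0" using assms(3) \<open>k > 0\<close> by (simp add: \<delta>_def)
  obtain C where "C > 0" and abc: "abc_inequality C \<delta>"
    using abc_conjecture_obtain[OF assms(1) \<open>\<delta> > 0\<close>] .
  have exponent: "1 - (2 + \<epsilon>) / k = 1 - \<delta> - 2 / k"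
    using \<open>k > 0\<close> by (simp add: \<delta>_def field_simps)
  have "m = n" if "1 \<le> x" "k_full k m" "k_full k n" "x < real m" "x < real n"
      "real m \<le> x + min 1 (1 / C) / 4 * x powr (1 - \<delta> - 2 / k)"
      "real n \<le> x + min 1 (1 / C) / 4 * x powr (1 - \<delta> - 2 / k)" for x m n
    using k_full_not_both_in_short_interval[OF abc \<open>C > 0\<close> \<open>\<delta> > 0\<close> \<open>k > 0\<close>] that
    by (metis linorder_neqE_nat)
  then show ?thesis
    unfolding exponent using \<open>C > 0\<close>
    by (intro exI[of _ "min 1 (1 / C) / 4"] exI[of _ 1]) auto
qed

end
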